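(* There exist constants $0<a<b<+\infty$ such that, for the triangle Markov chain $(\mathcal T(n))_{n\in\mathbb N}$ obtained by iterated random barycentric subdivision from any initial triangle, with $J_n=J(\mathcal T(n))$, one has for all $n\in\mathbb N$ $$aJ_n\le J_{n+1}\le bJ_n .$$
   Context: A triangle is given by three points of the plane which are not all equal. Barycentric subdivision: if a triangle has vertices $A,B,C$, let $D,E,F$ be the midpoints of $[A,B],[B,C],[C,A]$ and $G$ its barycenter; the medians cut it into the six triangles $\{A,D,G\},\{D,B,G\},\{B,E,G\},\{E,C,G\},\{C,F,G\},\{F,A,G\}$. The triangle Markov chain: $\mathcal T(0)$ is given and $\mathcal T(n+1)$ is chosen uniformly among the six triangles of the barycentric subdivision of $\mathcal T(n)$, independently of the past. For a triangle $\mathcal T$, $J(\mathcal T)\in(0,+\infty]$ is the sum of the squares of the lengths of its edges divided by its area ($J=+\infty$ for zero-area triangles, with the convention $c\cdot(+\infty)=+\infty$ for $c>0$). *)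

theory Defs
  imports "HOL-Analysis.Analysis"
begin

type_synonym triangle = "complex \<times> complex \<times> complex"

definition nondeg_points :: "triangle \<Rightarrow> bool" where
  "nondeg_points T = (case T of (A, B, C) \<Rightarrow> \<not> (A = B \<and> B = C))"

definition tri_area :: "triangle \<Rightarrow> real" where
  "tri_area T = (case T of (A, B, C) \<Rightarrow> \<bar>Im ((B - A) * cnj (C - A))\<bar> / 2)"

definition edge_sq_sum :: "triangle \<Rightarrow> real" where
  "edge_sq_sum T = (case T of (A, B, C) \<Rightarrow> (cmod (A - B))\<^sup>2 + (cmod (B - C))\<^sup>2 + (cmod (C - A))\<^sup>2)"

definition J :: "triangle \<Rightarrow> ereal" where
  "J T = (if tri_area T = 0 then \<infinity> else ereal (edge_sq_sum T / tri_area T))"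

definition bary_subdiv :: "triangle \<Rightarrow> triangle list" where
  "bary_subdiv T = (case T of (A, B, C) \<Rightarrow>
     (let D = (A + B) / 2; E = (B + C) / 2; F = (C + A) / 2; G = (A + B + C) / 3 in
      [(A, D, G), (D, B, G), (B, E, G), (E, C, G), (C, F, G), (F, A, G)]))"

text \<open>A trajectory of the triangle Markov chain: each step is one of the six
  subdivision triangles of the previous one.\<close>
definition chain_path :: "(nat \<Rightarrow> triangle) \<Rightarrow> bool" where
  "chain_path T = (nondeg_points (T 0) \<and> (\<forall>n. T (Suc n) \<in> set (bary_subdiv (T n))))"

end

theory Submission
  imports Defs
begin

text \<open>Each of the six small triangles is, up to the order of its vertices, a corner triangle
  \<open>(P, (P + Q) / 2, (P + Q + R) / 3)\<close> of some ordering \<open>(P, Q, R)\<close> of the vertices of the big one.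
  A corner triangle has exactly one sixth of the area, and its edge vectors and those of
  \<open>(P, Q, R)\<close> are fixed linear combinations of each other, so the sums of squared edge lengths
  are comparable within the factor 60. Hence \<open>J\<close> changes by a factor in \<open>[1/10, 6]\<close> at each step,
  and zero area is preserved.\<close>

lemma norm_add_power2_le:
  fixes a b :: "'a::real_normed_vector"
  shows "(norm (a + b))\<^sup>2 \<le> 2 * (norm a)\<^sup>2 + 2 * (norm b)\<^sup>2"
proof -
  have "(norm (a + b))\<^sup>2 \<le> (norm a + norm b)\<^sup>2"
    by (simp add: norm_triangle_ineq power_mono)
  also have "\<dots> \<le> 2 * (norm a)\<^sup>2 + 2 * (norm b)\<^sup>2"
    using sum_squares_ge_zero[of "norm a - norm b" 0] by (simp add: power2_eq_square algebra_simps)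
  finally show ?thesis .
qed

lemma edge_sq_sum_swap: "edge_sq_sum (A, B, C) = edge_sq_sum (B, A, C)"
  by (simp add: edge_sq_sum_def norm_minus_commute)

lemma edge_sq_sum_rotate: "edge_sq_sum (A, B, C) = edge_sq_sum (B, C, A)"
  by (simp add: edge_sq_sum_def)

lemma tri_area_swap: "tri_area (A, B, C) = tri_area (B, A, C)"
  unfolding tri_area_def by (simp add: algebra_simps)

lemma tri_area_rotate: "tri_area (A, B, C) = tri_area (B, C, A)"
  unfolding tri_area_def by (simp add: algebra_simps)

lemma tri_area_corner: "tri_area (P, (P + Q) / 2, (P + Q + R) / 3) = tri_area (P, Q, R) / 6"
proof -
  have "Im (((P + Q) / 2 - P) * cnj ((P + Q + R) / 3 - P)) = Im ((Q - P) * cnj (R - P)) / 6"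
    by (simp add: field_simps)
  then show ?thesis
    by (simp only: tri_area_def prod.case abs_divide)
qed

lemma bary_subdiv_corner_cases:
  assumes swap: "\<And>A B C. f (A, B, C) = f (B, A, C)"
    and rotate: "\<And>A B C. f (A, B, C) = f (B, C, A)"
    and "T' \<in> set (bary_subdiv (A, B, C))"
  obtains P Q R where "f (P, Q, R) = f (A, B, C)" and "f T' = f (P, (P + Q) / 2, (P + Q + R) / 3)"
proof -
  have "f (B, A, C) = f (A, B, C)" "f (B, C, A) = f (A, B, C)" "f (C, A, B) = f (A, B, C)"
    "f (C, B, A) = f (A, B, C)" "f (A, C, B) = f (A, B, C)"
    by (metis swap rotate)+
  with assms(3) that show ?thesis
    unfolding bary_subdiv_def Let_def by (auto simp: add_ac swap[of "(_ + _) / 2"])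
qed

lemma edge_sq_sum_corner_le:
  "edge_sq_sum (P, (P + Q) / 2, (P + Q + R) / 3) \<le> edge_sq_sum (P, Q, R)"
proof -
  define u v where "u = Q - P" and "v = R - P"
  have corner_edges: "P - (P + Q) / 2 = - (u / 2)"
    "(P + Q) / 2 - (P + Q + R) / 3 = (u + (- 2 * v)) / 6" "(P + Q + R) / 3 - P = (u + v) / 3"
    by (simp_all add: u_def v_def field_simps)
  have "edge_sq_sum (P, (P + Q) / 2, (P + Q + R) / 3)
      = (cmod u)\<^sup>2 / 4 + (cmod (u + (- 2 * v)))\<^sup>2 / 36 + (cmod (u + v))\<^sup>2 / 9"
    by (simp only: edge_sq_sum_def prod.case corner_edges) (simp add: norm_divide power_divide)
  also have "\<dots> \<le> (cmod u)\<^sup>2 + (cmod v)\<^sup>2"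
    using norm_add_power2_le[of u "- 2 * v"] norm_add_power2_le[of u v]
    by (simp add: norm_mult power_mult_distrib)
      (use zero_le_power2[of "cmod u"] zero_le_power2[of "cmod v"] in linarith)
  also have "\<dots> \<le> edge_sq_sum (P, Q, R)"
    by (simp add: edge_sq_sum_def u_def v_def norm_minus_commute)
  finally show ?thesis .
qed

lemma edge_sq_sum_le_corner:
  "edge_sq_sum (P, Q, R) \<le> 60 * edge_sq_sum (P, (P + Q) / 2, (P + Q + R) / 3)"
proof -
  define x y where "x = P - (P + Q) / 2" and "y = (P + Q + R) / 3 - P"
  have "P - Q = 2 * x" "Q - R = - 4 * x + - 3 * y" "R - P = 2 * x + 3 * y"
    by (simp_all add: x_def y_def field_simps)
  then have "edge_sq_sum (P, Q, R)
      = 4 * (cmod x)\<^sup>2 + (cmod (- 4 * x + - 3 * y))\<^sup>2 + (cmod (2 * x + 3 * y))\<^sup>2"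
    by (simp add: edge_sq_sum_def norm_mult power_mult_distrib)
  also have "\<dots> \<le> 60 * ((cmod x)\<^sup>2 + (cmod y)\<^sup>2)"
    using norm_add_power2_le[of "- 4 * x" "- 3 * y"] norm_add_power2_le[of "2 * x" "3 * y"]
    by (simp add: norm_mult power_mult_distrib)
      (use zero_le_power2[of "cmod x"] zero_le_power2[of "cmod y"] in linarith)
  also have "\<dots> \<le> 60 * edge_sq_sum (P, (P + Q) / 2, (P + Q + R) / 3)"
    by (simp add: edge_sq_sum_def x_def y_def)
  finally show ?thesis .
qed

lemma J_bary_subdiv_bounds:
  assumes "T' \<in> set (bary_subdiv T)"
  shows "ereal (1 / 10) * J T \<le> J T'" and "J T' \<le> ereal 6 * J T"
proof -
  obtain A B C where T: "T = (A, B, C)" by (cases T)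
  have area: "tri_area T' = tri_area T / 6"
    using bary_subdiv_corner_cases[of tri_area, OF tri_area_swap tri_area_rotate] assms tri_area_corner
    unfolding T by metis
  have "edge_sq_sum T \<le> 60 * edge_sq_sum T'"
    using bary_subdiv_corner_cases[of edge_sq_sum, OF edge_sq_sum_swap edge_sq_sum_rotate]
      assms edge_sq_sum_le_corner
    unfolding T by metis
  moreover have "edge_sq_sum T' \<le> edge_sq_sum T"
    using bary_subdiv_corner_cases[of edge_sq_sum, OF edge_sq_sum_swap edge_sq_sum_rotate]
      assms edge_sq_sum_corner_le
    unfolding T by metis
  moreover have "tri_area T \<ge> 0"
    by (simp add: T tri_area_def)
  ultimately show "ereal (1 / 10) * J T \<le> J T'" "J T' \<le> ereal 6 * J T"
    by (auto simp: J_def area field_simps)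
qed

theorem lemma6:
  shows "\<exists>a b :: real. 0 < a \<and> a < b \<and>
    (\<forall>T :: nat \<Rightarrow> triangle. chain_path T \<longrightarrow>
       (\<forall>n. ereal a * J (T n) \<le> J (T (Suc n)) \<and> J (T (Suc n)) \<le> ereal b * J (T n)))"
  using J_bary_subdiv_bounds unfolding chain_path_def
  by (intro exI[of _ "1 / 10"] exI[of _ 6]) auto

end
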